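(* Let $G=(V,E)$ be a graph and $T\subseteq E$ a spanning tree of $G$. Let $e\in T$ and $s_e\in E\setminus T$ be such that $T'=T-e+s_e$ is a spanning tree. Let $f\in T\setminus\{e\}$ and $s\in E\setminus(T\cup\{s_e\})$ (so $f\in T'$ and $s\notin T'$). Let $C_e$ be the unique cycle in $T+s_e$, $C_s$ the unique cycle in $T+s$, $C'_e$ the unique cycle in $T'+e$, and $C'_s$ the unique cycle in $T'+s$. Suppose that neither of the following holds: (i) $f\in C_e$ and $e\in C_s$; (ii) $f\in C'_e$ and $s_e\in C'_s$. Then $T-f+s$ is connected if and only if $T'-f+s$ is connected. *)

theory Defs
  imports Main
begin

text \<open>Finite simple undirected graphs: vertex set V, edges are 2-element subsets of V.
  Subgraphs are given by edge sets; a spanning subgraph uses all of V.\<close>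

definition graph :: "'a set \<Rightarrow> 'a set set \<Rightarrow> bool" where
  "graph V E \<longleftrightarrow> finite V \<and> (\<forall>x\<in>E. x \<subseteq> V \<and> card x = 2)"

definition adj :: "'a set set \<Rightarrow> ('a \<times> 'a) set" where
  "adj F = {(x, y). {x, y} \<in> F \<and> x \<noteq> y}"

definition connected_on :: "'a set \<Rightarrow> 'a set set \<Rightarrow> bool" where
  "connected_on V F \<longleftrightarrow> (\<forall>u\<in>V. \<forall>v\<in>V. (u, v) \<in> (adj F)\<^sup>*)"

definition is_cycle :: "'a set set \<Rightarrow> bool" where
  "is_cycle C \<longleftrightarrow> C \<noteq> {} \<and> finite C \<and> (\<forall>x\<in>C. card x = 2) \<and>
     (\<forall>v\<in>\<Union>C. card {x\<in>C. v \<in> x} = 2) \<and> connected_on (\<Union>C) C"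

definition acyclic_edges :: "'a set set \<Rightarrow> bool" where
  "acyclic_edges F \<longleftrightarrow> \<not> (\<exists>C. C \<subseteq> F \<and> is_cycle C)"

definition spanning_tree :: "'a set \<Rightarrow> 'a set set \<Rightarrow> 'a set set \<Rightarrow> bool" where
  "spanning_tree V E T \<longleftrightarrow> T \<subseteq> E \<and> connected_on V T \<and> acyclic_edges T"

definition fund_cycle :: "'a set set \<Rightarrow> 'a set \<Rightarrow> 'a set set" where
  "fund_cycle T s = (THE C. C \<subseteq> insert s T \<and> is_cycle C)"

end

(*
  For an edge x of E outside a spanning tree T and an edge y of T, y lies on the fundamental
  cycle of x iff y separates the ends of x in T, iff T - y + x is connected. So T - f + s is
  connected iff f lies on C_s, and likewise for T'. If e is not on C_s, then C_s also lies in
  T' + s and is therefore C'_s. If e is on C_s, hypothesis (i) puts f outside C_e, i.e. the ends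
  of s_e lie in one component of T - f; then trading e for s_e does not change the components of
  T - f, and T - f + s and T' - f + s are connected together.
*)
theory Submission
  imports Defs
begin

abbreviation reach :: "'a set set \<Rightarrow> 'a \<Rightarrow> 'a \<Rightarrow> bool" where
  "reach F u v \<equiv> (u, v) \<in> (adj F)\<^sup>*"

lemma reach_sym: "reach F u v \<Longrightarrow> reach F v u"
proof -
  have "sym (adj F)" unfolding sym_def adj_def by (auto simp: insert_commute)
  then have "sym ((adj F)\<^sup>*)" by (rule sym_rtrancl)
  moreover assume "reach F u v"
  ultimately show ?thesis by (meson symD)
qed

lemma adj_mono: "F \<subseteq> G \<Longrightarrow> adj F \<subseteq> adj G"
  by (auto simp: adj_def)

lemma reach_mono: "F \<subseteq> G \<Longrightarrow> reach F u v \<Longrightarrow> reach G u v"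
  using rtrancl_mono[OF adj_mono] by blast

lemma reach_edge: "{u, v} \<in> F \<Longrightarrow> reach F u v"
  by (cases "u = v") (auto simp: adj_def intro!: r_into_rtrancl)

lemma reach_Diff_edge:
  assumes "reach F a w"
  shows "reach (F - {{a, b}}) a w \<or> reach (F - {{a, b}}) b w"
  using assms
proof (induction rule: rtrancl_induct)
  case (step y z)
  show ?case
  proof (cases "{y, z} = {a, b}")
    case True
    then show ?thesis by (metis doubleton_eq_iff rtrancl.rtrancl_refl)
  next
    case False
    with step.hyps(2) have "(y, z) \<in> adj (F - {{a, b}})" by (auto simp: adj_def)
    with step.IH show ?thesis by (meson rtrancl.rtrancl_into_rtrancl)
  qed
qed simp

lemma reach_insert_shortcut:
  assumes "reach F c d" and "reach (insert {c, d} F) u w"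
  shows "reach F u w"
  using assms(2)
proof (induction rule: rtrancl_induct)
  case (step y z)
  from step.hyps(2) have "{y, z} = {c, d} \<or> {y, z} \<in> F" by (auto simp: adj_def)
  then have "reach F y z"
    using assms(1) reach_sym[OF assms(1)] reach_edge by (auto simp: doubleton_eq_iff)
  with step.IH show ?case by (rule rtrancl_trans)
qed simp

section \<open>Walks\<close>

fun walk_edges :: "'a list \<Rightarrow> 'a set set" where
  "walk_edges (a # b # r) = insert {a, b} (walk_edges (b # r))"
| "walk_edges _ = {}"

lemma walk_edges_append_subset: "walk_edges (u # ys) \<subseteq> walk_edges (xs @ u # ys)"
proof (induction xs)
  case (Cons x xs) then show ?case by (cases xs) auto
qed simp

lemma finite_walk_edges: "finite (walk_edges p)"
  by (induction p rule: walk_edges.induct) auto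

lemma card_walk_edge: "distinct p \<Longrightarrow> z \<in> walk_edges p \<Longrightarrow> card z = 2"
  by (induction p rule: walk_edges.induct) auto

lemma Union_walk_edges: "length p \<ge> 2 \<Longrightarrow> \<Union>(walk_edges p) = set p"
proof (induction p rule: walk_edges.induct)
  case (1 a b r)
  then show ?case by (cases r) auto
qed auto

lemma reach_walk_edges_hd: "w \<in> set p \<Longrightarrow> reach (walk_edges p) (hd p) w"
proof (induction p rule: walk_edges.induct)
  case (1 a b r)
  show ?case
  proof (cases "w = a")
    case False
    with 1 have "reach (walk_edges (b # r)) b w" by simp
    then have "reach (walk_edges (a # b # r)) b w" by (rule reach_mono[rotated]) auto
    moreover have "reach (walk_edges (a # b # r)) a b" by (rule reach_edge) simp
    ultimately show ?thesis by (simp add: rtrancl_trans)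
  qed simp
qed auto

lemma reach_imp_distinct_walk:
  assumes "reach G u v"
  obtains p where "p \<noteq> []" "hd p = u" "last p = v" "distinct p" "walk_edges p \<subseteq> G"
proof -
  from assms have "\<exists>p. p \<noteq> [] \<and> hd p = u \<and> last p = v \<and> distinct p \<and> walk_edges p \<subseteq> G"
  proof (induction rule: converse_rtrancl_induct)
    case base
    show ?case by (rule exI[of _ "[v]"]) simp
  next
    case (step y z)
    then obtain p where p: "p \<noteq> []" "hd p = z" "last p = v" "distinct p" "walk_edges p \<subseteq> G"
      by blast
    show ?case
    proof (cases "y \<in> set p")
      case True
      then obtain xs ys where "p = xs @ y # ys" by (meson split_list)
      with p walk_edges_append_subset[of y ys xs] show ?thesis by (intro exI[of _ "y # ys"]) auto
    next
      case False
      from p obtain p' where "p = z # p'" by (cases p) auto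
      with p False step.hyps(1) show ?thesis by (intro exI[of _ "y # p"]) (auto simp: adj_def)
    qed
  qed
  with that show ?thesis by blast
qed

lemma card_edges_containing_insert:
  assumes "finite W" "x \<notin> W"
  shows "card {z \<in> insert x W. w \<in> z} =
    (if w \<in> x then Suc (card {z \<in> W. w \<in> z}) else card {z \<in> W. w \<in> z})"
proof -
  have "{z \<in> insert x W. w \<in> z} = (if w \<in> x then insert x {z \<in> W. w \<in> z} else {z \<in> W. w \<in> z})"
    by auto
  then show ?thesis using assms by simp
qed

lemma card_walk_edges_containing:
  "distinct p \<Longrightarrow> length p \<ge> 2 \<Longrightarrow> card {z \<in> walk_edges p. w \<in> z} =
     (if w \<notin> set p then 0 else if w = hd p \<or> w = last p then 1 else 2)"
proof (induction p rule: walk_edges.induct)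
  case (1 a b r)
  let ?W = "walk_edges (b # r)"
  have "a \<notin> \<Union>?W" using Union_walk_edges[of "b # r"] "1.prems"(1) by (cases r) auto
  then have "{a, b} \<notin> ?W" by blast
  then have ins: "card {z \<in> walk_edges (a # b # r). w \<in> z} =
    (if w \<in> {a, b} then Suc (card {z \<in> ?W. w \<in> z}) else card {z \<in> ?W. w \<in> z})"
    using card_edges_containing_insert[OF finite_walk_edges] by (simp only: walk_edges.simps)
  show ?case
  proof (cases r)
    case Nil
    then show ?thesis using ins "1.prems"(1) by auto
  next
    case (Cons c r')
    then have "last r \<noteq> a" "last r \<noteq> b" using "1.prems"(1) last_in_set[of r] by auto
    with "1.IH" "1.prems"(1) ins \<open>a \<notin> \<Union>?W\<close> Cons show ?thesis by auto
  qed
qed auto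

section \<open>Cycles\<close>

lemma is_cycle_close_walk:
  assumes p: "distinct p" "length p \<ge> 2" and new: "{hd p, last p} \<notin> walk_edges p"
  shows "is_cycle (insert {hd p, last p} (walk_edges p))" (is "is_cycle ?C")
proof -
  obtain x y ys where xy: "p = x # y # ys"
    using p(2) by (metis One_nat_def Suc_1 Suc_le_length_iff)
  have ends: "hd p \<in> set p" "last p \<in> set p" using xy by auto
  have "hd p \<noteq> last p" using p(1) xy by auto
  have UC: "\<Union>?C = set p" using Union_walk_edges[OF p(2)] ends by blast
  have fin: "finite ?C" by (simp add: finite_walk_edges)
  have card2: "\<forall>z\<in>?C. card z = 2"
    using card_walk_edge[OF p(1)] \<open>hd p \<noteq> last p\<close> by auto
  have deg: "\<forall>w\<in>\<Union>?C. card {z \<in> ?C. w \<in> z} = 2"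
  proof
    fix w assume "w \<in> \<Union>?C"
    then have "w \<in> set p" by (simp only: UC)
    moreover have "card {z \<in> ?C. w \<in> z} =
      (if w \<in> {hd p, last p} then Suc (card {z \<in> walk_edges p. w \<in> z})
       else card {z \<in> walk_edges p. w \<in> z})"
      by (rule card_edges_containing_insert[OF finite_walk_edges new])
    ultimately show "card {z \<in> ?C. w \<in> z} = 2"
      using card_walk_edges_containing[OF p, of w] by auto
  qed
  have conn: "connected_on (\<Union>?C) ?C"
    unfolding connected_on_def UC
  proof (intro ballI)
    fix a b assume "a \<in> set p" "b \<in> set p"
    then have "reach ?C (hd p) a" "reach ?C (hd p) b"
      by (auto intro: reach_mono[OF subset_insertI reach_walk_edges_hd])
    then show "reach ?C a b" by (meson reach_sym rtrancl_trans)
  qed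
  show ?thesis
    unfolding is_cycle_def using fin card2 deg conn by blast
qed

lemma reach_imp_cycle_through_edge:
  assumes "reach G u v" "u \<noteq> v" "{u, v} \<notin> G"
  obtains C where "C \<subseteq> insert {u, v} G" "is_cycle C" "{u, v} \<in> C"
proof -
  obtain p where p: "p \<noteq> []" "hd p = u" "last p = v" "distinct p" "walk_edges p \<subseteq> G"
    using reach_imp_distinct_walk[OF assms(1)] by blast
  have "length p \<ge> 2"
  proof (rule ccontr)
    assume "\<not> length p \<ge> 2"
    then have "length (tl p) = 0" by simp
    then have "tl p = []" by (simp only: length_0_conv)
    then have "hd p = last p" using p(1) by (metis last_ConsL list.collapse)
    with p(2,3) assms(2) show False by simp
  qed
  moreover have "{hd p, last p} \<notin> walk_edges p" using p assms(3) by blast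
  ultimately have "is_cycle (insert {u, v} (walk_edges p))"
    using is_cycle_close_walk[OF p(4)] p(2,3) by simp
  moreover have "insert {u, v} (walk_edges p) \<subseteq> insert {u, v} G" using p(5) by blast
  ultimately show ?thesis using that by blast
qed

lemma sum_card_edges_containing:
  assumes "finite C" "finite S"
  shows "(\<Sum>w\<in>S. card {z \<in> C. w \<in> z}) = (\<Sum>z\<in>C. card (z \<inter> S))"
proof -
  have "card {z \<in> C. w \<in> z} = (\<Sum>z\<in>C. if w \<in> z then 1 else 0)" for w
    using assms(1) by (simp only: card_eq_sum sum.inter_filter)
  then have "(\<Sum>w\<in>S. card {z \<in> C. w \<in> z}) = (\<Sum>w\<in>S. \<Sum>z\<in>C. if w \<in> z then 1 else 0)"
    by simp
  also have "\<dots> = (\<Sum>z\<in>C. \<Sum>w\<in>S. if w \<in> z then 1 else 0)" by (rule sum.swap)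
  also have "\<dots> = (\<Sum>z\<in>C. card {w \<in> S. w \<in> z})"
    using assms(2) by (simp only: card_eq_sum sum.inter_filter)
  finally show ?thesis by (simp add: Int_def conj_commute)
qed

lemma cycle_edgeE:
  assumes "is_cycle C" "z \<in> C"
  obtains a b where "z = {a, b}" "a \<noteq> b"
proof -
  have "card z = 2" using assms by (simp add: is_cycle_def)
  with that show ?thesis by (meson card_2_iff)
qed

lemma finite_Union_cycle:
  assumes "is_cycle C"
  shows "finite (\<Union>C)"
proof -
  have "finite z" if "z \<in> C" for z
    using assms that card.infinite[of z] by (force simp: is_cycle_def)
  with assms show ?thesis by (simp add: is_cycle_def)
qed

lemma even_sum_card_Int_cycle:
  assumes C: "is_cycle C" and S: "S \<subseteq> \<Union>C"
  shows "even (\<Sum>z\<in>C. card (z \<inter> S))"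
proof -
  have "finite S" using finite_subset[OF S finite_Union_cycle[OF C]] .
  then have "(\<Sum>z\<in>C. card (z \<inter> S)) = (\<Sum>w\<in>S. card {z \<in> C. w \<in> z})"
    using C by (simp add: sum_card_edges_containing is_cycle_def)
  also have "\<dots> = (\<Sum>w\<in>S. 2)"
    using C S by (intro sum.cong) (auto simp: is_cycle_def)
  finally show ?thesis by simp
qed

text \<open>The component S of u in C without {u, v} meets every other edge of C in 0 or 2 vertices,
  and meets {u, v} only in u if v is not in S; this contradicts the evenness of the degree sum.\<close>
lemma cycle_reach_Diff_edge:
  assumes C: "is_cycle C" and uv: "{u, v} \<in> C" "u \<noteq> v"
  shows "reach (C - {{u, v}}) u v"
proof (rule ccontr)
  assume not_reach: "\<not> ?thesis"
  define S where "S = {w \<in> \<Union>C. reach (C - {{u, v}}) u w}"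
  have uv_S: "{u, v} \<inter> S = {u}" using uv not_reach by (auto simp: S_def)
  have "even (card (z \<inter> S))" if z: "z \<in> C - {{u, v}}" for z
  proof -
    obtain p q where pq: "z = {p, q}" "p \<noteq> q" using cycle_edgeE[OF C] z by blast
    have "reach (C - {{u, v}}) p q" "reach (C - {{u, v}}) q p"
      using z pq reach_edge[of p q] reach_edge[of q p] by (auto simp: insert_commute)
    then have "p \<in> S \<longleftrightarrow> q \<in> S"
      using z pq unfolding S_def by (blast intro: rtrancl_trans)
    then have "z \<inter> S = {} \<or> z \<inter> S = z" using pq by auto
    then show ?thesis using pq by auto
  qed
  then have "even (\<Sum>z\<in>C - {{u, v}}. card (z \<inter> S))" by (intro dvd_sum) auto
  moreover have "(\<Sum>z\<in>C. card (z \<inter> S)) = card ({u, v} \<inter> S) + (\<Sum>z\<in>C - {{u, v}}. card (z \<inter> S))"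
    using C uv by (simp add: sum.remove is_cycle_def)
  moreover have "S \<subseteq> \<Union>C" by (auto simp: S_def)
  then have "even (\<Sum>z\<in>C. card (z \<inter> S))" by (rule even_sum_card_Int_cycle[OF C])
  ultimately show False using uv_S by simp
qed

section \<open>Exchanging tree edges\<close>

lemma acyclic_edges_not_reach_Diff_edge:
  assumes "acyclic_edges T" "{a, b} \<in> T" "a \<noteq> b"
  shows "\<not> reach (T - {{a, b}}) a b"
proof
  assume "reach (T - {{a, b}}) a b"
  moreover have "{a, b} \<notin> T - {{a, b}}" by simp
  ultimately obtain C where "C \<subseteq> insert {a, b} (T - {{a, b}})" "is_cycle C"
    by (rule reach_imp_cycle_through_edge[OF _ assms(3)])
  moreover have "insert {a, b} (T - {{a, b}}) = T" using assms(2) by blast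
  ultimately show False using assms(1) unfolding acyclic_edges_def by blast
qed

lemma connected_on_Diff_edge_sides:
  "connected_on V T \<Longrightarrow> a \<in> V \<Longrightarrow> w \<in> V \<Longrightarrow>
    reach (T - {{a, b}}) a w \<or> reach (T - {{a, b}}) b w"
  by (simp add: connected_on_def reach_Diff_edge)

lemma connected_on_insert_across:
  assumes sides: "\<And>w. w \<in> V \<Longrightarrow> reach F a w \<or> reach F b w"
    and cd: "c \<in> V" "d \<in> V" "\<not> reach F c d"
  shows "connected_on V (insert {c, d} F)"
proof -
  let ?G = "insert {c, d} F"
  have F_G: "reach ?G x y" if "reach F x y" for x y
    using reach_mono[OF subset_insertI that] .
  have cd_G: "reach ?G c d" by (rule reach_edge) simp
  have "reach ?G a b"
  proof (cases "reach F a c")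
    case a_c: True
    have "\<not> reach F a d"
      using cd(3) rtrancl_trans[OF reach_sym[OF a_c]] by blast
    then have "reach F b d" using sides[OF cd(2)] by blast
    have "reach ?G a d" by (rule rtrancl_trans[OF F_G[OF a_c] cd_G])
    then show ?thesis by (rule rtrancl_trans[OF _ F_G[OF reach_sym[OF \<open>reach F b d\<close>]]])
  next
    case False
    then have b_c: "reach F b c" using sides[OF cd(1)] by blast
    have "\<not> reach F b d"
      using cd(3) rtrancl_trans[OF reach_sym[OF b_c]] by blast
    then have "reach F a d" using sides[OF cd(2)] by blast
    have "reach ?G a c" by (rule rtrancl_trans[OF F_G[OF \<open>reach F a d\<close>] reach_sym[OF cd_G]])
    then show ?thesis by (rule rtrancl_trans[OF _ F_G[OF reach_sym[OF b_c]]])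
  qed
  then have a_G: "reach ?G a w" if "w \<in> V" for w
    using sides[OF that] F_G rtrancl_trans[of a b _ w] by blast
  show ?thesis
    unfolding connected_on_def
  proof (intro ballI)
    fix u w assume "u \<in> V" "w \<in> V"
    show "reach ?G u w" by (rule rtrancl_trans[OF reach_sym[OF a_G[OF \<open>u \<in> V\<close>]] a_G[OF \<open>w \<in> V\<close>]])
  qed
qed

lemma connected_on_exchange_iff_not_reach:
  assumes T: "connected_on V T" "acyclic_edges T"
    and ab: "{a, b} \<in> T" "a \<noteq> b" "a \<in> V" "b \<in> V" and cd: "c \<in> V" "d \<in> V"
  shows "connected_on V (insert {c, d} (T - {{a, b}})) \<longleftrightarrow> \<not> reach (T - {{a, b}}) c d"
proof
  assume "connected_on V (insert {c, d} (T - {{a, b}}))"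
  then have "reach (insert {c, d} (T - {{a, b}})) a b" using ab by (simp add: connected_on_def)
  show "\<not> reach (T - {{a, b}}) c d"
  proof
    assume "reach (T - {{a, b}}) c d"
    from this \<open>reach (insert {c, d} (T - {{a, b}})) a b\<close>
    have "reach (T - {{a, b}}) a b" by (rule reach_insert_shortcut)
    with acyclic_edges_not_reach_Diff_edge[OF T(2) ab(1,2)] show False by contradiction
  qed
next
  assume "\<not> reach (T - {{a, b}}) c d"
  with connected_on_Diff_edge_sides[OF T(1) ab(3)] cd
  show "connected_on V (insert {c, d} (T - {{a, b}}))"
    by (rule connected_on_insert_across)
qed

text \<open>If {c, d} joins two vertices of one component of T - {a, b}, then T' - {a, b} has the same
  components: every vertex reaches a or b in T' - {a, b}, while a and b stay apart in T - {a, b}.\<close>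
lemma reach_Diff_edge_exchange_iff:
  assumes T: "acyclic_edges T" and T': "connected_on V T'"
    and ab: "{a, b} \<in> T" "a \<noteq> b" "a \<in> V"
    and sub: "T' - {{a, b}} \<subseteq> insert {c, d} (T - {{a, b}})" and cd: "reach (T - {{a, b}}) c d"
    and uw: "u \<in> V" "w \<in> V"
  shows "reach (T' - {{a, b}}) u w \<longleftrightarrow> reach (T - {{a, b}}) u w"
proof -
  let ?F = "T - {{a, b}}" and ?F' = "T' - {{a, b}}"
  have F'_F: "reach ?F x y" if "reach ?F' x y" for x y
    using reach_insert_shortcut[OF cd reach_mono[OF sub that]] .
  have sep: "\<not> reach ?F a b" by (rule acyclic_edges_not_reach_Diff_edge[OF T ab(1,2)])
  have sides: "reach ?F' a v \<or> reach ?F' b v" if "v \<in> V" for v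
    by (rule connected_on_Diff_edge_sides[OF T' ab(3) that])
  show ?thesis
  proof
    assume "reach ?F u w"
    show "reach ?F' u w"
    proof (cases "reach ?F' a u \<longleftrightarrow> reach ?F' a w")
      case True
      then show ?thesis using sides[OF uw(1)] sides[OF uw(2)]
        by (meson reach_sym rtrancl_trans)
    next
      case False
      then have "reach ?F' a u \<and> reach ?F' b w \<or> reach ?F' b u \<and> reach ?F' a w"
        using sides[OF uw(1)] sides[OF uw(2)] by blast
      then have "reach ?F a u \<and> reach ?F b w \<or> reach ?F b u \<and> reach ?F a w"
        using F'_F by blast
      with \<open>reach ?F u w\<close> have "reach ?F a b"
        by (meson reach_sym rtrancl_trans)
      with sep show ?thesis by contradiction
    qed
  qed (rule F'_F)
qed

section \<open>Fundamental cycles\<close>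

lemma graph_edgeE:
  assumes "graph V E" "x \<in> E"
  obtains a b where "x = {a, b}" "a \<noteq> b" "a \<in> V" "b \<in> V"
proof -
  have "x \<subseteq> V" "card x = 2" using assms by (auto simp: graph_def)
  then show ?thesis using that by (auto simp: card_2_iff)
qed

lemma cycle_subset_insert_mem:
  assumes "acyclic_edges T" "C \<subseteq> insert x T" "is_cycle C"
  shows "x \<in> C"
  using assms unfolding acyclic_edges_def by blast

lemma mem_cycle_iff_not_reach:
  assumes T: "acyclic_edges T" and C: "C \<subseteq> insert {c, d} T" "is_cycle C" and y: "y \<in> T"
  shows "y \<in> C \<longleftrightarrow> \<not> reach (T - {y}) c d"
proof
  assume "y \<in> C"
  then obtain a b where ab: "y = {a, b}" "a \<noteq> b" by (rule cycle_edgeE[OF C(2)])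
  have "reach (C - {y}) a b" using cycle_reach_Diff_edge[OF C(2)] \<open>y \<in> C\<close> ab by simp
  moreover have "C - {y} \<subseteq> insert {c, d} (T - {y})" using C(1) by blast
  ultimately have a_b: "reach (insert {c, d} (T - {y})) a b" by (rule reach_mono[rotated])
  show "\<not> reach (T - {y}) c d"
  proof
    assume "reach (T - {y}) c d"
    from this a_b have "reach (T - {y}) a b" by (rule reach_insert_shortcut)
    with acyclic_edges_not_reach_Diff_edge[OF T y[unfolded ab] ab(2)] ab show False by simp
  qed
next
  assume not_reach: "\<not> reach (T - {y}) c d"
  show "y \<in> C"
  proof (rule ccontr)
    assume "y \<notin> C"
    have cd: "{c, d} \<in> C" by (rule cycle_subset_insert_mem[OF T C])
    then obtain a b where "{c, d} = {a, b}" "a \<noteq> b" by (rule cycle_edgeE[OF C(2)])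
    then have "c \<noteq> d" by (auto simp: doubleton_eq_iff)
    with cd have "reach (C - {{c, d}}) c d" by (rule cycle_reach_Diff_edge[OF C(2)])
    moreover have "C - {{c, d}} \<subseteq> T - {y}" using C(1) \<open>y \<notin> C\<close> by blast
    ultimately have "reach (T - {y}) c d" by (rule reach_mono[rotated])
    with not_reach show False by contradiction
  qed
qed

text \<open>A cycle in T + x is determined by T and x: it consists of x and the edges y of T whose
  removal separates the ends of x.\<close>
lemma fund_cycle_eqI:
  assumes T: "acyclic_edges T" and C: "C \<subseteq> insert x T" "is_cycle C"
  shows "fund_cycle T x = C"
  unfolding fund_cycle_def
proof (rule the_equality)
  show "C \<subseteq> insert x T \<and> is_cycle C" using C by simp
next
  fix D assume "D \<subseteq> insert x T \<and> is_cycle D"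
  then have D: "D \<subseteq> insert x T" "is_cycle D" by simp_all
  have "x \<in> C" by (rule cycle_subset_insert_mem[OF T C])
  then obtain c d where x: "x = {c, d}" by (rule cycle_edgeE[OF C(2)])
  have "x \<in> D" by (rule cycle_subset_insert_mem[OF T D])
  show "D = C"
  proof (rule set_eqI)
    fix z show "z \<in> D \<longleftrightarrow> z \<in> C"
    proof (cases "z \<in> T")
      case True
      show ?thesis
        using mem_cycle_iff_not_reach[OF T D(1)[unfolded x] D(2) True]
          mem_cycle_iff_not_reach[OF T C(1)[unfolded x] C(2) True] by simp
    next
      case False
      with C(1) D(1) \<open>x \<in> C\<close> \<open>x \<in> D\<close> show ?thesis by auto
    qed
  qed
qed

lemma fund_cycle_is_cycle:
  assumes "graph V E" "spanning_tree V E T" "x \<in> E - T"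
  shows "fund_cycle T x \<subseteq> insert x T" "is_cycle (fund_cycle T x)"
proof -
  obtain c d where x: "x = {c, d}" "c \<noteq> d" "c \<in> V" "d \<in> V"
    using graph_edgeE assms(1,3) by blast
  have T: "connected_on V T" "acyclic_edges T" using assms(2) by (auto simp: spanning_tree_def)
  then have "reach T c d" using x by (simp add: connected_on_def)
  moreover have "{c, d} \<notin> T" using x assms(3) by blast
  ultimately obtain C where "C \<subseteq> insert {c, d} T" "is_cycle C"
    by (rule reach_imp_cycle_through_edge[OF _ x(2)])
  with x(1) show "fund_cycle T x \<subseteq> insert x T" "is_cycle (fund_cycle T x)"
    by (simp_all add: fund_cycle_eqI[OF T(2)])
qed

lemma mem_fund_cycle_iff_connected_on:
  assumes G: "graph V E" and T: "spanning_tree V E T" and x: "x \<in> E - T" and y: "y \<in> T"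
  shows "y \<in> fund_cycle T x \<longleftrightarrow> connected_on V (insert x (T - {y}))"
proof -
  have T': "T \<subseteq> E" "connected_on V T" "acyclic_edges T" using T by (auto simp: spanning_tree_def)
  obtain c d where cd: "x = {c, d}" "c \<in> V" "d \<in> V" using graph_edgeE G x by blast
  obtain a b where ab: "y = {a, b}" "a \<noteq> b" "a \<in> V" "b \<in> V" using graph_edgeE G T'(1) y by blast
  have "y \<in> fund_cycle T x \<longleftrightarrow> \<not> reach (T - {y}) c d"
    using mem_cycle_iff_not_reach[OF T'(3) _ _ y] fund_cycle_is_cycle[OF G T x] cd by simp
  also have "\<dots> \<longleftrightarrow> connected_on V (insert x (T - {y}))"
    using connected_on_exchange_iff_not_reach[OF T'(2,3) y[unfolded ab] ab(2-4) cd(2,3)] ab cd by simp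
  finally show ?thesis .
qed

lemma connected_on_insert_Diff_exchange_iff:
  assumes G: "graph V E" and T: "spanning_tree V E T" and T': "spanning_tree V E T'"
    and f: "f \<in> T" "f \<in> T'" and se: "se \<in> E" "T' - {f} \<subseteq> insert se (T - {f})"
    and se_inside: "\<not> connected_on V (insert se (T - {f}))" and s: "s \<in> E"
  shows "connected_on V (insert s (T - {f})) \<longleftrightarrow> connected_on V (insert s (T' - {f}))"
proof -
  have T_props: "connected_on V T" "acyclic_edges T" "T \<subseteq> E"
    and T'_props: "connected_on V T'" "acyclic_edges T'"
    using T T' by (auto simp: spanning_tree_def)
  obtain a b where ab: "f = {a, b}" "a \<noteq> b" "a \<in> V" "b \<in> V"
    using graph_edgeE G T_props(3) f(1) by blast
  obtain c d where cd: "s = {c, d}" "c \<in> V" "d \<in> V" using graph_edgeE G s by blast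
  obtain c' d' where cd': "se = {c', d'}" "c' \<in> V" "d' \<in> V" using graph_edgeE G se(1) by blast
  have "reach (T - {f}) c' d'"
    using se_inside connected_on_exchange_iff_not_reach[OF T_props(1,2) f(1)[unfolded ab] ab(2-4) cd'(2,3)]
      ab cd' by simp
  with se(2) have "reach (T' - {f}) c d \<longleftrightarrow> reach (T - {f}) c d"
    using reach_Diff_edge_exchange_iff[OF T_props(2) T'_props(1) f(1)[unfolded ab] ab(2,3) _ _ cd(2,3)]
      ab cd' by simp
  then show ?thesis
    using connected_on_exchange_iff_not_reach[OF T_props(1,2) f(1)[unfolded ab] ab(2-4) cd(2,3)]
      connected_on_exchange_iff_not_reach[OF T'_props f(2)[unfolded ab] ab(2-4) cd(2,3)] ab cd by simp
qed

theorem lemmaD1: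
  fixes V :: "'a set" and E T :: "'a set set" and e se f s :: "'a set"
  assumes "graph V E"
    and "spanning_tree V E T"
    and "e \<in> T" and "se \<in> E - T"
    and "spanning_tree V E (insert se (T - {e}))"
    and "f \<in> T - {e}"
    and "s \<in> E - (T \<union> {se})"
    and "\<not> (f \<in> fund_cycle T se \<and> e \<in> fund_cycle T s)"
    and "\<not> (f \<in> fund_cycle (insert se (T - {e})) e \<and>
            se \<in> fund_cycle (insert se (T - {e})) s)"
  shows "connected_on V (insert s (T - {f})) \<longleftrightarrow>
         connected_on V (insert s (insert se (T - {e}) - {f}))"
proof -
  note G = assms(1) and T = assms(2)
  define T' where "T' = insert se (T - {e})"
  have T': "spanning_tree V E T'" using assms(5) by (simp add: T'_def)
  have f: "f \<in> T" "f \<in> T'" and s: "s \<in> E - T" "s \<in> E - T'" and se: "se \<in> E - T"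
    using assms(4,6,7) by (auto simp: T'_def)
  have "connected_on V (insert s (T - {f})) \<longleftrightarrow> connected_on V (insert s (T' - {f}))"
  proof (cases "e \<in> fund_cycle T s")
    case False
    then have "fund_cycle T s \<subseteq> insert s T'"
      using fund_cycle_is_cycle(1)[OF G T s(1)] by (auto simp: T'_def)
    with T' fund_cycle_is_cycle(2)[OF G T s(1)] have "fund_cycle T' s = fund_cycle T s"
      by (simp add: fund_cycle_eqI spanning_tree_def)
    then show ?thesis
      using mem_fund_cycle_iff_connected_on[OF G T s(1) f(1)]
        mem_fund_cycle_iff_connected_on[OF G T' s(2) f(2)] by simp
  next
    case True
    with assms(8) have se_inside: "\<not> connected_on V (insert se (T - {f}))"
      using mem_fund_cycle_iff_connected_on[OF G T se f(1)] by simp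
    have "T' - {f} \<subseteq> insert se (T - {f})" by (auto simp: T'_def)
    then show ?thesis
      using connected_on_insert_Diff_exchange_iff[OF G T T' f _ _ se_inside] se s by blast
  qed
  then show ?thesis by (simp add: T'_def)
qed

end
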